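(* Let $R$ be a regular ring with unity and let $e_1,\dots,e_n$ be idempotents of $R$ with $e_ie_j=0$ for all $i\ne j$. Then the following are equivalent: (i) $e_1+e_2+\dots+e_n=1$; (ii) if $e$ is an idempotent of $R$ with $e_i\,\omega\,e$ for every $i=1,\dots,n$, then $e=1$.
   Context: A ring is regular if for every $x$ there is $y$ with $xyx=x$. For idempotents, $f\,\omega\,e$ means $fe=f=ef$. *)

theory Defs
  imports Main
begin

definition regular_ring :: "'a::ring_1 itself \<Rightarrow> bool" where
  "regular_ring _ \<longleftrightarrow> (\<forall>x::'a. \<exists>y. x * y * x = x)"

definition idempotent :: "'a::ring_1 \<Rightarrow> bool" where
  "idempotent e \<longleftrightarrow> e * e = e"

definition omega_le :: "'a::ring_1 \<Rightarrow> 'a \<Rightarrow> bool" (infix "\<omega>" 50) where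
  "f \<omega> e \<longleftrightarrow> f * e = f \<and> e * f = f"

end

theory Submission
  imports Defs
begin

text \<open>The sum \<open>s\<close> of the \<open>e\<^sub>i\<close> is itself an idempotent with \<open>e\<^sub>i \<omega> s\<close> for every \<open>i\<close>,
  so (ii) forces \<open>s = 1\<close>. Conversely, \<open>e\<^sub>i \<omega> e\<close> for all \<open>i\<close> gives \<open>s * e = s\<close>, which for
  \<open>s = 1\<close> reads \<open>e = 1\<close>.\<close>

definition orthogonal_idempotents :: "('i \<Rightarrow> 'a::ring_1) \<Rightarrow> 'i set \<Rightarrow> bool" where
  "orthogonal_idempotents es I \<longleftrightarrow>
     (\<forall>i\<in>I. idempotent (es i)) \<and> (\<forall>i\<in>I. \<forall>j\<in>I. i \<noteq> j \<longrightarrow> es i * es j = 0)"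

lemma mult_sum_orthogonal_idempotents:
  assumes "orthogonal_idempotents es I" "finite I" "i \<in> I"
  shows "es i * sum es I = es i"
proof -
  have "es i * sum es I = (\<Sum>j\<in>I. es i * es j)"
    by (simp add: sum_distrib_left)
  also have "\<dots> = (\<Sum>j\<in>I. if j = i then es i else 0)"
    using assms by (intro sum.cong) (auto simp: orthogonal_idempotents_def idempotent_def)
  also have "\<dots> = es i"
    using assms by simp
  finally show ?thesis .
qed

lemma sum_orthogonal_idempotents_mult:
  assumes "orthogonal_idempotents es I" "finite I" "i \<in> I"
  shows "sum es I * es i = es i"
proof -
  have "sum es I * es i = (\<Sum>j\<in>I. es j * es i)"
    by (simp add: sum_distrib_right)
  also have "\<dots> = (\<Sum>j\<in>I. if j = i then es i else 0)"
    using assms by (intro sum.cong) (auto simp: orthogonal_idempotents_def idempotent_def)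
  also have "\<dots> = es i"
    using assms by simp
  finally show ?thesis .
qed

lemma idempotent_sum_orthogonal_idempotents:
  assumes "orthogonal_idempotents es I" "finite I"
  shows "idempotent (sum es I)"
proof -
  have "sum es I * sum es I = (\<Sum>i\<in>I. es i * sum es I)"
    by (simp add: sum_distrib_right)
  also have "\<dots> = sum es I"
    using assms by (intro sum.cong) (auto simp: mult_sum_orthogonal_idempotents)
  finally show ?thesis
    by (simp add: idempotent_def)
qed

lemma omega_le_sum_orthogonal_idempotents:
  assumes "orthogonal_idempotents es I" "finite I" "i \<in> I"
  shows "es i \<omega> sum es I"
  using assms by (simp add: omega_le_def mult_sum_orthogonal_idempotents
      sum_orthogonal_idempotents_mult)

lemma sum_mult_eq_sum_if_omega_le:
  assumes "\<forall>i\<in>I. es i \<omega> e"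
  shows "sum es I * e = sum es I"
  using assms by (simp add: sum_distrib_right omega_le_def)

lemma sum_orthogonal_idempotents_eq_1_iff:
  assumes "orthogonal_idempotents es I" "finite I"
  shows "sum es I = 1 \<longleftrightarrow> (\<forall>e. idempotent e \<longrightarrow> (\<forall>i\<in>I. es i \<omega> e) \<longrightarrow> e = 1)"
proof
  assume "sum es I = 1"
  then show "\<forall>e. idempotent e \<longrightarrow> (\<forall>i\<in>I. es i \<omega> e) \<longrightarrow> e = 1"
    using sum_mult_eq_sum_if_omega_le by fastforce
next
  assume "\<forall>e. idempotent e \<longrightarrow> (\<forall>i\<in>I. es i \<omega> e) \<longrightarrow> e = 1"
  then show "sum es I = 1"
    using assms by (simp add: idempotent_sum_orthogonal_idempotents
        omega_le_sum_orthogonal_idempotents)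
qed

theorem proposition4p1:
  fixes es :: "nat \<Rightarrow> 'a::ring_1" and n :: nat
  assumes "regular_ring TYPE('a)"
    and "\<And>i. i \<in> {1..n} \<Longrightarrow> idempotent (es i)"
    and "\<And>i j. i \<in> {1..n} \<Longrightarrow> j \<in> {1..n} \<Longrightarrow> i \<noteq> j \<Longrightarrow> es i * es j = 0"
  shows "(\<Sum>i=1..n. es i) = 1 \<longleftrightarrow>
         (\<forall>e. idempotent e \<longrightarrow> (\<forall>i\<in>{1..n}. es i \<omega> e) \<longrightarrow> e = 1)"
proof -
  have "orthogonal_idempotents es {1..n}"
    using assms(2,3) by (simp add: orthogonal_idempotents_def)
  then show ?thesis
    using sum_orthogonal_idempotents_eq_1_iff by blast
qed

end
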